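(* Let $p$ be a prime, $s\geq 2$, and let $t_1\geq 1,t_2,\dots,t_s$ be nonnegative integers with $t_s\geq 1$. Let $\mathcal{H}_s=\mathcal{H}^{t_1,\dots,t_s}$ (a $\mathbb{Z}_{p^s}$-additive code) and $\mathcal{H}_{s+1}=\mathcal{H}^{1,t_1-1,t_2,\dots,t_{s-1},t_s-1}$ (a $\mathbb{Z}_{p^{s+1}}$-additive code). Then $H_s=\Phi_s(\mathcal{H}_s)$ is permutation equivalent to $H_{s+1}=\Phi_{s+1}(\mathcal{H}_{s+1})$, i.e. there is a coordinate permutation $\pi$ with $H_{s+1}=\pi(H_s)$.
   Context: For $r\geq 1$ and $u\in\mathbb{Z}_{p^r}$ with $p$-ary expansion $u=\sum_{i=0}^{r-1}u_ip^i$, the Gray map $\phi_r:\mathbb{Z}_{p^r}\to\mathbb{Z}_p^{p^{r-1}}$ is $\phi_r(u)=(u_{r-1},\dots,u_{r-1})+(u_0,\dots,u_{r-2})Y_{r-1}$, where $Y_1=(0\ 1\ \cdots\ p-1)$ and $Y_k$ is the $k\times p^k$ matrix with first $k-1$ rows $(Y_{k-1}\ \cdots\ Y_{k-1})$ ($p$ copies) and last row $(0,\dots,0,1,\dots,1,\dots,p-1,\dots,p-1)$ (constant blocks of length $p^{k-1}$); $\phi_1$ is the identity; $\Phi_r$ applies $\phi_r$ coordinatewise and concatenates. For a ring $\mathbb{Z}_{p^r}$ and $1\le i\le r$ let $T_i=\{jp^{i-1}:0\le j\le p^{r-i+1}-1\}$. For nonnegative integers $a_1\ge 1,a_2,\dots,a_r$,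 $A^{a_1,\dots,a_r}$ is the matrix over $\mathbb{Z}_{p^r}$ whose columns are all $\mathbf{z}^T$ with $\mathbf{z}\in\{1\}\times T_1^{a_1-1}\times T_2^{a_2}\times\cdots\times T_r^{a_r}$, and $\mathcal{H}^{a_1,\dots,a_r}\subseteq\mathbb{Z}_{p^r}^n$ is the subgroup generated by its rows. *)

theory Defs
  imports Main "HOL-Computational_Algebra.Primes"
begin

text \<open>Elements of Z_(p^r) are represented by naturals below p^r.\<close>

definition pdigit :: "nat \<Rightarrow> nat \<Rightarrow> nat \<Rightarrow> nat" where
  "pdigit p i u = (u div p ^ i) mod p"

text \<open>Y p k j c = entry (row j, column c), 0-based, of the k x p^k matrix Y_k.\<close>
fun Ymat :: "nat \<Rightarrow> nat \<Rightarrow> nat \<Rightarrow> nat \<Rightarrow> nat" where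
  "Ymat p 0 j c = 0"
| "Ymat p (Suc 0) j c = c"
| "Ymat p (Suc (Suc k)) j c =
     (if j < Suc k then Ymat p (Suc k) j (c mod p ^ Suc k) else c div p ^ Suc k)"

text \<open>Gray map phi_r : Z_(p^r) -> Z_p^(p^(r-1)); coordinate c < p^(r-1).\<close>
definition gray :: "nat \<Rightarrow> nat \<Rightarrow> nat \<Rightarrow> nat \<Rightarrow> nat" where
  "gray p r u c = (if r = 1 then u else
     (pdigit p (r - 1) u + (\<Sum>j<r - 1. pdigit p j u * Ymat p (r - 1) j c)) mod p)"

definition Tset :: "nat \<Rightarrow> nat \<Rightarrow> nat \<Rightarrow> nat set" where
  "Tset p r i = {j * p ^ (i - 1) | j. j < p ^ (r - i + 1)}"

text \<open>Columns of A^(a_1,...,a_r), r = length a: the set {1} x T_1^(a_1-1) x T_2^(a_2) x ... x T_r^(a_r).\<close>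
definition colsA :: "nat \<Rightarrow> nat list \<Rightarrow> nat list set" where
  "colsA p a = listset ({1} # tl (concat (map (\<lambda>i. replicate (a ! i) (Tset p (length a) (Suc i)))
                                           [0..<length a])))"

text \<open>The code H^(a_1,...,a_r): the subgroup of Z_(p^r)^n generated by the rows of A,
  i.e. all Z-linear combinations of rows; codewords are functions on the column set
  (extended by 0 outside).\<close>
definition Hcode :: "nat \<Rightarrow> nat list \<Rightarrow> (nat list \<Rightarrow> nat) set" where
  "Hcode p a = {(\<lambda>z. if z \<in> colsA p a
                    then (\<Sum>k<sum_list a. lam k * z ! k) mod p ^ length a else 0)
               | lam :: nat \<Rightarrow> nat. True}"

definition grayIdx :: "nat \<Rightarrow> nat list \<Rightarrow> (nat list \<times> nat) set" where
  "grayIdx p a = colsA p a \<times> {..<p ^ (length a - 1)}"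

definition grayCode :: "nat \<Rightarrow> nat list \<Rightarrow> (nat list \<times> nat \<Rightarrow> nat) set" where
  "grayCode p a = {(\<lambda>(z, c). if (z, c) \<in> grayIdx p a then gray p (length a) (w z) c else 0)
                  | w. w \<in> Hcode p a}"

definition perm_equiv :: "'i set \<Rightarrow> ('i \<Rightarrow> nat) set \<Rightarrow> 'j set \<Rightarrow> ('j \<Rightarrow> nat) set \<Rightarrow> bool" where
  "perm_equiv I1 C1 I2 C2 \<longleftrightarrow>
     (\<exists>\<pi>. bij_betw \<pi> I2 I1 \<and> C2 = {(\<lambda>x. if x \<in> I2 then w (\<pi> x) else 0) | w. w \<in> C1})"

end

theory Submission
  imports Defs
begin

(* Write a codeword of H_(s+1) at the column 1.(p w) as lambda_0 + p V, where V is the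
   contribution of the rows indexed by w. Coordinate c of its Gray image satisfies
   phi_(s+1)(mu + p x)_c = phi_s(x)_(c div p) + mu (c mod p), and adding p^(s-1) e to an
   element of Z_(p^s) adds e to every coordinate of its Gray image. So, splitting
   lambda_0 = p L + E with E < p, this coordinate equals coordinate c div p, at the column
   1.w.((c mod p) p^(s-1)), of the Gray image of the codeword of H_s with coefficients L on
   the first row and E on the last row, whose entries run through T_s = p^(s-1) Z. The
   coordinate map (1.(p w), c) -> (1.w.((c mod p) p^(s-1)), c div p) is a bijection. *)

subsection \<open>Column sets\<close>

lemma listset_iff: "xs \<in> listset As \<longleftrightarrow> list_all2 (\<in>) xs As"
proof (induction As arbitrary: xs)
  case Nil
  then show ?case by auto
next
  case (Cons A As)
  then show ?case by (cases xs) (auto simp: set_Cons_def)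
qed

lemma listset_snoc: "listset (As @ [B]) = {xs @ [y] | xs y. xs \<in> listset As \<and> y \<in> B}"
proof (intro equalityI subsetI)
  fix zs
  assume "zs \<in> listset (As @ [B])"
  then obtain xs y where "zs = xs @ [y]" "list_all2 (\<in>) xs As" "y \<in> B"
    by (auto simp: listset_iff list_all2_append2 list_all2_Cons2)
  then show "zs \<in> {xs @ [y] | xs y. xs \<in> listset As \<and> y \<in> B}"
    by (auto simp: listset_iff)
next
  fix zs
  assume "zs \<in> {xs @ [y] | xs y. xs \<in> listset As \<and> y \<in> B}"
  then show "zs \<in> listset (As @ [B])"
    by (auto simp: listset_iff list_all2_appendI)
qed

lemma listset_map_image: "listset (map ((`) f) As) = map f ` listset As"
proof (induction As)
  case Nil
  then show ?case by simp
next
  case (Cons A As)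
  have "set_Cons (f ` A) (map f ` listset As) = map f ` set_Cons A (listset As)"
    by (auto simp: set_Cons_def image_iff) (metis list.map(2))
  with Cons show ?case
    by simp
qed

lemma concat_map_replicate_Cons:
  "concat (map (\<lambda>i. replicate ((x # xs) ! i) (F i)) [0..<length (x # xs)])
   = replicate x (F 0) @ concat (map (\<lambda>i. replicate (xs ! i) (F (Suc i))) [0..<length xs])"
  by (simp add: upt_conv_Cons map_Suc_upt[symmetric] comp_def del: upt_Suc)

lemma concat_map_replicate_snoc:
  "concat (map (\<lambda>i. replicate ((xs @ [x]) ! i) (F i)) [0..<length (xs @ [x])])
   = concat (map (\<lambda>i. replicate (xs ! i) (F i)) [0..<length xs]) @ replicate x (F (length xs))"
proof -
  have "map (\<lambda>i. replicate ((xs @ [x]) ! i) (F i)) [0..<length xs]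
      = map (\<lambda>i. replicate (xs ! i) (F i)) [0..<length xs]"
    by (rule map_cong) (simp_all add: nth_append)
  then show ?thesis
    by (simp only: length_append_singleton upt_Suc_append[OF le0] map_append concat_append) simp
qed

definition col_factors :: "nat \<Rightarrow> nat list \<Rightarrow> nat set list" where
  "col_factors p a = concat (map (\<lambda>i. replicate (a ! i) (Tset p (length a) (Suc i))) [0..<length a])"

lemma colsA_eq_listset: "colsA p a = listset ({1} # tl (col_factors p a))"
  unfolding colsA_def col_factors_def ..

lemma length_col_factors: "length (col_factors p a) = sum_list a"
  by (simp add: col_factors_def length_concat comp_def sum_list_sum_nth atLeast0LessThan)

lemma Tset_Suc_Suc: "Tset p (Suc r) (Suc (Suc i)) = (*) p ` Tset p r (Suc i)"
  unfolding Tset_def by (auto simp: ac_simps)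

lemma Tset_last: "Tset p r r = {j * p ^ (r - 1) | j. j < p}"
  unfolding Tset_def by simp

lemma col_factors_Cons_one:
  "col_factors p (1 # b) = Tset p (Suc (length b)) 1 # map ((`) ((*) p)) (col_factors p b)"
  unfolding col_factors_def concat_map_replicate_Cons
  by (simp add: Tset_Suc_Suc map_concat comp_def)

lemma col_factors_Cons_snoc:
  assumes "1 \<le> a" "1 \<le> z"
  shows "col_factors p (a # xs @ [z])
    = Tset p (length xs + 2) 1 # col_factors p ((a - 1) # xs @ [z - 1])
      @ [Tset p (length xs + 2) (length xs + 2)]"
proof -
  obtain a' z' where "a = Suc a'" "z = Suc z'"
    using assms by (cases a; cases z) auto
  then show ?thesis
    unfolding col_factors_def concat_map_replicate_Cons concat_map_replicate_snoc
    by (simp add: replicate_append_same)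
qed

subsection \<open>The Gray map in terms of \<open>p\<close>-ary digits\<close>

lemma div_less_power_diff_one: "c < p ^ r \<Longrightarrow> 0 < r \<Longrightarrow> c div (p::nat) < p ^ (r - 1)"
  by (cases r) (simp_all add: less_mult_imp_div_less mult.commute)

lemma add_mult_less_power:
  assumes "j < p" "c < p ^ (r - 1)" "0 < r"
  shows "j + p * c < (p::nat) ^ r"
proof -
  have "j + p * c < p * Suc c"
    using assms(1) by simp
  also have "\<dots> \<le> p * p ^ (r - 1)"
    using assms(2) by (intro mult_le_mono2) simp
  also have "\<dots> = p ^ r"
    using assms(3) by (cases r) simp_all
  finally show ?thesis .
qed

lemma pdigit_0: "pdigit p 0 u = u mod p"
  unfolding pdigit_def by simp

lemma pdigit_Suc: "pdigit p (Suc j) u = pdigit p j (u div p)"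
  unfolding pdigit_def by (simp add: div_mult2_eq)

lemma pdigit_mod_power:
  assumes "0 < p" "j < k"
  shows "pdigit p j (u mod p ^ k) = pdigit p j u"
proof -
  have "p ^ k = p ^ j * p ^ (k - j)"
    using assms by (simp flip: power_add)
  then have "u mod p ^ k div p ^ j = u div p ^ j mod p ^ (k - j)"
    using assms by (simp add: mod_mult2_eq)
  moreover have "p dvd p ^ (k - j)"
    using assms by simp
  ultimately show ?thesis
    unfolding pdigit_def by (simp add: mod_mod_cancel)
qed

lemma pdigit_add_mult_power_low:
  assumes "0 < p" "j < r"
  shows "pdigit p j (u + p ^ r * e) = pdigit p j u"
proof -
  have "p ^ r = p ^ j * (p * p ^ (r - Suc j))"
    using assms by (simp flip: power_add power_Suc)
  then have "(u + p ^ r * e) div p ^ j = u div p ^ j + p * (p ^ (r - Suc j) * e)"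
    using assms by (simp add: mult.assoc)
  then show ?thesis
    unfolding pdigit_def by simp
qed

lemma pdigit_add_mult_power:
  assumes "0 < p"
  shows "pdigit p r (u + p ^ r * e) = (pdigit p r u + e) mod p"
proof -
  have "(u + p ^ r * e) div p ^ r = u div p ^ r + e"
    using assms by simp
  then show ?thesis
    unfolding pdigit_def by (simp add: mod_add_left_eq)
qed

lemma Ymat_eq_pdigit: "1 \<le> k \<Longrightarrow> j < k \<Longrightarrow> c < p ^ k \<Longrightarrow> Ymat p k j c = pdigit p j c"
proof (induction p k j c rule: Ymat.induct)
  case (1 p j c)
  then show ?case by simp
next
  case (2 p j c)
  then show ?case by (simp add: pdigit_def)
next
  case (3 p k j c)
  have "0 < p"
    using "3.prems"(3) by (cases "p = 0") simp_all
  show ?case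
  proof (cases "j < Suc k")
    case True
    then show ?thesis
      using 3 \<open>0 < p\<close> by (simp add: pdigit_mod_power del: power_Suc)
  next
    case False
    then have "j = Suc k"
      using "3.prems"(2) by simp
    moreover have "c div p ^ Suc k < p"
      using "3.prems"(3) by (simp add: less_mult_imp_div_less mult.commute)
    ultimately show ?thesis
      by (simp add: pdigit_def)
  qed
qed

lemma gray_eq_pdigit_sum:
  assumes "2 \<le> r" "0 < p" "c < p ^ (r - 1)"
  shows "gray p r u c = (pdigit p (r - 1) u + (\<Sum>j<r - 1. pdigit p j u * pdigit p j c)) mod p"
  using assms unfolding gray_def by (simp add: Ymat_eq_pdigit)

lemma gray_mod_power:
  assumes "2 \<le> r" "0 < p"
  shows "gray p r (u mod p ^ r) c = gray p r u c"
  using assms unfolding gray_def by (simp add: pdigit_mod_power)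

lemma gray_add_mult_power:
  assumes "2 \<le> r" "0 < p" "c < p ^ (r - 1)"
  shows "gray p r (u + p ^ (r - 1) * e) c = (gray p r u c + e) mod p"
proof -
  have "(\<Sum>j<r - 1. pdigit p j (u + p ^ (r - 1) * e) * pdigit p j c)
      = (\<Sum>j<r - 1. pdigit p j u * pdigit p j c)"
    using assms by (simp add: pdigit_add_mult_power_low)
  moreover have "pdigit p (r - 1) (u + p ^ (r - 1) * e) = (pdigit p (r - 1) u + e) mod p"
    using assms(2) by (rule pdigit_add_mult_power)
  ultimately show ?thesis
    using assms by (simp only: gray_eq_pdigit_sum) (simp add: mod_simps ac_simps)
qed

lemma gray_Suc_add_mult:
  assumes "2 \<le> r" "0 < p" "\<mu> < p" "c < p ^ r"
  shows "gray p (Suc r) (\<mu> + p * x) c = (gray p r x (c div p) + \<mu> * (c mod p)) mod p"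
proof -
  obtain r' where r': "r = Suc r'"
    using assms by (cases r) auto
  have "c div p < p ^ r'"
    using assms r' by (simp add: less_mult_imp_div_less mult.commute)
  moreover have "(\<Sum>j<r. pdigit p j (\<mu> + p * x) * pdigit p j c)
      = \<mu> * (c mod p) + (\<Sum>j<r'. pdigit p j x * pdigit p j (c div p))"
    unfolding r' sum.lessThan_Suc_shift pdigit_0 pdigit_Suc
    using assms by (simp add: div_mult2_eq)
  ultimately show ?thesis
    using assms r' by (simp add: gray_eq_pdigit_sum pdigit_Suc mod_simps ac_simps)
qed

lemma gray_Suc_mod_add_mult:
  assumes "2 \<le> r" "0 < p" "c < p ^ r"
  shows "gray p (Suc r) (e mod p + p * y) c = gray p r (y + e * (c mod p) * p ^ (r - 1)) (c div p)"
proof -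
  have "c div p < p ^ (r - 1)"
    using assms by (intro div_less_power_diff_one) simp_all
  have "gray p (Suc r) (e mod p + p * y) c = (gray p r y (c div p) + e mod p * (c mod p)) mod p"
    using assms by (simp add: gray_Suc_add_mult)
  also have "\<dots> = (gray p r y (c div p) + e * (c mod p)) mod p"
    by (metis mod_add_right_eq mod_mult_left_eq)
  also have "\<dots> = gray p r (y + p ^ (r - 1) * (e * (c mod p))) (c div p)"
    by (simp only: gray_add_mult_power[OF assms(1,2) \<open>c div p < p ^ (r - 1)\<close>])
  finally show ?thesis
    by (simp add: ac_simps)
qed

subsection \<open>Gray images of the codes\<close>

definition lin_comb :: "(nat \<Rightarrow> nat) \<Rightarrow> nat list \<Rightarrow> nat" where
  "lin_comb lam z = (\<Sum>k<length z. lam k * z ! k)"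

lemma lin_comb_Cons: "lin_comb lam (x # z) = lam 0 * x + lin_comb (\<lambda>k. lam (Suc k)) z"
  unfolding lin_comb_def length_Cons sum.lessThan_Suc_shift by simp

lemma lin_comb_snoc: "lin_comb lam (z @ [y]) = lin_comb lam z + lam (length z) * y"
  unfolding lin_comb_def by (simp add: nth_append)

lemma lin_comb_map_mult: "lin_comb lam (map ((*) c) z) = c * lin_comb lam z"
  unfolding lin_comb_def by (simp add: sum_distrib_left ac_simps)

lemma lin_comb_cong: "(\<And>k. k < length z \<Longrightarrow> lam k = lam' k) \<Longrightarrow> lin_comb lam z = lin_comb lam' z"
  unfolding lin_comb_def by (rule sum.cong) simp_all

(* The reduction mod p^r in Hcode is omitted: phi_r only depends on u mod p^r. *)
definition gray_codeword :: "nat \<Rightarrow> nat list \<Rightarrow> (nat \<Rightarrow> nat) \<Rightarrow> nat list \<times> nat \<Rightarrow> nat" where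
  "gray_codeword p a lam =
     (\<lambda>(z, c). if (z, c) \<in> grayIdx p a then gray p (length a) (lin_comb lam z) c else 0)"

(* Without sum_list a \<noteq> 0 the statement fails: then col_factors p a = [] and colsA p a = {[1]}. *)
lemma length_colsA:
  assumes "z \<in> colsA p a" "sum_list a \<noteq> 0"
  shows "length z = sum_list a"
proof -
  have "length z = Suc (length (tl (col_factors p a)))"
    using assms(1) unfolding colsA_eq_listset listset_iff by (auto dest: list_all2_lengthD)
  then show ?thesis
    using assms(2) by (simp add: length_col_factors)
qed

lemma grayCode_eq_range:
  assumes "2 \<le> length a" "0 < p" "sum_list a \<noteq> 0"
  shows "grayCode p a = range (gray_codeword p a)"
proof -
  define cw where "cw lam z = (if z \<in> colsA p a
    then (\<Sum>k<sum_list a. lam k * z ! k) mod p ^ length a else 0)" for lam z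
  have "grayCode p a
      = {\<lambda>(z, c). if (z, c) \<in> grayIdx p a then gray p (length a) (cw lam z) c else 0 | lam. True}"
    unfolding grayCode_def Hcode_def cw_def by auto
  moreover have "(\<lambda>(z, c). if (z, c) \<in> grayIdx p a then gray p (length a) (cw lam z) c else 0)
      = gray_codeword p a lam" for lam
  proof (intro ext, clarify)
    fix z c
    show "(if (z, c) \<in> grayIdx p a then gray p (length a) (cw lam z) c else 0)
        = gray_codeword p a lam (z, c)"
    proof (cases "(z, c) \<in> grayIdx p a")
      case True
      then have "z \<in> colsA p a"
        by (simp add: grayIdx_def)
      then have "length z = sum_list a"
        using assms(3) by (rule length_colsA)
      with True show ?thesis
        using assms by (simp add: cw_def gray_codeword_def grayIdx_def lin_comb_def gray_mod_power)
    qed (simp add: gray_codeword_def)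
  qed
  ultimately show ?thesis
    by auto
qed

lemma perm_equiv_range_intro:
  assumes "bij_betw \<pi> I2 I1"
    and "\<And>l x. x \<notin> I2 \<Longrightarrow> F2 l x = 0"
    and "\<And>l'. \<exists>l. \<forall>x\<in>I2. F2 l' x = F1 l (\<pi> x)"
    and "\<And>l. \<exists>l'. \<forall>x\<in>I2. F2 l' x = F1 l (\<pi> x)"
  shows "perm_equiv I1 (range F1) I2 (range F2)"
  unfolding perm_equiv_def
proof (intro exI conjI equalityI subsetI)
  show "bij_betw \<pi> I2 I1"
    by fact
next
  fix f
  assume "f \<in> range F2"
  then obtain l' where f: "f = F2 l'"
    by blast
  obtain l where "\<forall>x\<in>I2. F2 l' x = F1 l (\<pi> x)"
    using assms(3) by blast
  then have "f = (\<lambda>x. if x \<in> I2 then F1 l (\<pi> x) else 0)"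
    using f assms(2) by (auto simp: fun_eq_iff)
  then show "f \<in> {\<lambda>x. if x \<in> I2 then w (\<pi> x) else 0 | w. w \<in> range F1}"
    by blast
next
  fix f
  assume "f \<in> {\<lambda>x. if x \<in> I2 then w (\<pi> x) else 0 | w. w \<in> range F1}"
  then obtain l where f: "f = (\<lambda>x. if x \<in> I2 then F1 l (\<pi> x) else 0)"
    by blast
  obtain l' where "\<forall>x\<in>I2. F2 l' x = F1 l (\<pi> x)"
    using assms(4) by blast
  then have "f = F2 l'"
    using f assms(2) by (auto simp: fun_eq_iff)
  then show "f \<in> range F2"
    by blast
qed

lemma bij_betw_gray_index:
  fixes p r :: nat and W :: "nat list set"
  assumes "0 < p" "1 \<le> r"
  shows "bij_betw (\<lambda>(z, c). (1 # map (\<lambda>x. x div p) (tl z) @ [c mod p * p ^ (r - 1)], c div p))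
    {(1 # map ((*) p) w, c) | w c. w \<in> W \<and> c < p ^ r}
    {(1 # w @ [j * p ^ (r - 1)], c) | w j c. w \<in> W \<and> j < p \<and> c < p ^ (r - 1)}"
    (is "bij_betw ?\<pi> ?I2 ?I1")
proof (rule bij_betw_byWitness)
  define g where "g = (\<lambda>(z, c). (1 # map ((*) p) (butlast (tl z)), last z div p ^ (r - 1) + p * c))"
  have \<pi>: "?\<pi> (1 # map ((*) p) w, c) = (1 # w @ [c mod p * p ^ (r - 1)], c div p)" for w c
    using assms by (simp add: comp_def)
  have g: "g (1 # w @ [j * p ^ (r - 1)], c) = (1 # map ((*) p) w, j + p * c)" if "j < p" for w j c
    using assms that by (simp add: g_def)
  show "\<forall>x\<in>?I2. g (?\<pi> x) = x"
  proof
    fix x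
    assume "x \<in> ?I2"
    then obtain w c where x: "x = (1 # map ((*) p) w, c)"
      by blast
    have "c mod p < p"
      using assms by simp
    then show "g (?\<pi> x) = x"
      unfolding x by (simp only: \<pi> g) simp
  qed
  show "\<forall>x\<in>?I1. ?\<pi> (g x) = x"
  proof
    fix x
    assume "x \<in> ?I1"
    then obtain w j c where x: "x = (1 # w @ [j * p ^ (r - 1)], c)" and "j < p"
      by blast
    then show "?\<pi> (g x) = x"
      unfolding x by (simp only: \<pi> g) simp
  qed
  show "?\<pi> ` ?I2 \<subseteq> ?I1"
  proof
    fix y
    assume "y \<in> ?\<pi> ` ?I2"
    then obtain w c where "w \<in> W" "c < p ^ r" and y: "y = ?\<pi> (1 # map ((*) p) w, c)"
      by blast
    moreover have "c mod p < p" "c div p < p ^ (r - 1)"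
      using assms \<open>c < p ^ r\<close> by (simp, intro div_less_power_diff_one) simp_all
    ultimately show "y \<in> ?I1"
      unfolding y \<pi> by blast
  qed
  show "g ` ?I1 \<subseteq> ?I2"
  proof
    fix y
    assume "y \<in> g ` ?I1"
    then obtain w j c where "w \<in> W" "j < p" "c < p ^ (r - 1)"
      and y: "y = g (1 # w @ [j * p ^ (r - 1)], c)"
      by blast
    moreover have "j + p * c < p ^ r"
      using \<open>j < p\<close> \<open>c < p ^ (r - 1)\<close> assms(2) by (intro add_mult_less_power) simp_all
    ultimately show "y \<in> ?I2"
      unfolding y g[OF \<open>j < p\<close>] by blast
  qed
qed

lemma grayIdx_Cons_one:
  "grayIdx p (1 # b)
    = {(1 # map ((*) p) w, c) | w c. w \<in> listset (col_factors p b) \<and> c < p ^ length b}"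
  unfolding grayIdx_def colsA_eq_listset col_factors_Cons_one
  by (auto simp: listset_map_image set_Cons_def)

lemma grayIdx_eq_Cons_snoc:
  assumes "length t = r" "col_factors p t = Tset p r 1 # R @ [Tset p r r]"
  shows "grayIdx p t
    = {(1 # w @ [j * p ^ (r - 1)], c) | w j c. w \<in> listset R \<and> j < p \<and> c < p ^ (r - 1)}"
  unfolding grayIdx_def colsA_eq_listset assms(2)
  by (auto simp: assms(1) listset_snoc Tset_last set_Cons_def)

lemma gray_codeword_Cons_one_eq:
  assumes p: "0 < p" and r: "2 \<le> r" "length b = r" "length t = r"
    and factors: "col_factors p t = Tset p r 1 # col_factors p b @ [Tset p r r]"
    and w: "w \<in> listset (col_factors p b)" and c: "c < p ^ r"
    and lam'_0: "lam' 0 = lam (Suc (sum_list b)) mod p + p * lam 0"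
    and lam'_Suc: "\<And>k. k < sum_list b \<Longrightarrow> lam' (Suc k) = lam (Suc k)"
  shows "gray_codeword p (1 # b) lam' (1 # map ((*) p) w, c)
    = gray_codeword p t lam (1 # w @ [c mod p * p ^ (r - 1)], c div p)"
proof -
  define V where "V = lin_comb (\<lambda>k. lam (Suc k)) w"
  have length_w: "length w = sum_list b"
    using w unfolding listset_iff by (simp add: list_all2_lengthD length_col_factors)
  have "(1 # map ((*) p) w, c) \<in> grayIdx p (1 # b)"
    unfolding grayIdx_Cons_one using w c r by blast
  moreover have "lin_comb (\<lambda>k. lam' (Suc k)) w = V"
    unfolding V_def using lam'_Suc length_w by (intro lin_comb_cong) simp
  ultimately have "gray_codeword p (1 # b) lam' (1 # map ((*) p) w, c)
      = gray p (Suc r) (lam (Suc (sum_list b)) mod p + p * (lam 0 + V)) c"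
    by (simp add: gray_codeword_def r lin_comb_Cons lin_comb_map_mult lam'_0 algebra_simps)
  also have "\<dots> = gray p r (lam 0 + V + lam (Suc (sum_list b)) * (c mod p) * p ^ (r - 1)) (c div p)"
    using p r c by (simp add: gray_Suc_mod_add_mult)
  also have "\<dots> = gray_codeword p t lam (1 # w @ [c mod p * p ^ (r - 1)], c div p)"
  proof -
    have "c mod p < p" "c div p < p ^ (r - 1)"
      using p r c by (simp, intro div_less_power_diff_one) simp_all
    then have "(1 # w @ [c mod p * p ^ (r - 1)], c div p) \<in> grayIdx p t"
      unfolding grayIdx_eq_Cons_snoc[OF r(3) factors] using w by blast
    then show ?thesis
      by (simp add: gray_codeword_def r V_def lin_comb_Cons lin_comb_snoc length_w add.assoc mult.assoc)
  qed
  finally show ?thesis .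
qed

lemma perm_equiv_grayCode_Cons_one:
  assumes p: "0 < p" and b: "2 \<le> length b" and t: "length t = length b"
    and factors: "col_factors p t
      = Tset p (length b) 1 # col_factors p b @ [Tset p (length b) (length b)]"
  shows "perm_equiv (grayIdx p t) (grayCode p t) (grayIdx p (1 # b)) (grayCode p (1 # b))"
proof -
  define m where "m = sum_list b"
  define \<pi> where
    "\<pi> = (\<lambda>(z, c). (1 # map (\<lambda>x. x div p) (tl z) @ [c mod p * p ^ (length b - 1)], c div p))"
  have "sum_list t = Suc (Suc m)"
    using arg_cong[OF factors, of length] by (simp add: length_col_factors m_def)
  then have codes: "grayCode p t = range (gray_codeword p t)"
      "grayCode p (1 # b) = range (gray_codeword p (1 # b))"
    using p b t by (simp_all add: grayCode_eq_range)
  have transport: "gray_codeword p (1 # b) lam' x = gray_codeword p t lam (\<pi> x)"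
    if x_idx: "x \<in> grayIdx p (1 # b)" and lam'_0: "lam' 0 = lam (Suc m) mod p + p * lam 0"
      and lam'_Suc: "\<And>k. k < m \<Longrightarrow> lam' (Suc k) = lam (Suc k)" for lam lam' x
  proof -
    obtain w c where x: "x = (1 # map ((*) p) w, c)"
      and w: "w \<in> listset (col_factors p b)" and c: "c < p ^ length b"
      using x_idx unfolding grayIdx_Cons_one by blast
    have "\<pi> x = (1 # w @ [c mod p * p ^ (length b - 1)], c div p)"
      unfolding x \<pi>_def using p by (simp add: comp_def)
    then show ?thesis
      unfolding x using gray_codeword_Cons_one_eq[OF p b refl t factors w c] lam'_0 lam'_Suc
      by (simp add: m_def)
  qed
  show ?thesis
    unfolding codes
  proof (rule perm_equiv_range_intro)
    show "bij_betw \<pi> (grayIdx p (1 # b)) (grayIdx p t)"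
      unfolding grayIdx_eq_Cons_snoc[OF t factors] grayIdx_Cons_one \<pi>_def
      using p b by (intro bij_betw_gray_index) simp_all
    show "gray_codeword p (1 # b) lam x = 0" if "x \<notin> grayIdx p (1 # b)" for lam x
      using that by (cases x) (simp add: gray_codeword_def)
    show "\<exists>lam. \<forall>x\<in>grayIdx p (1 # b). gray_codeword p (1 # b) lam' x = gray_codeword p t lam (\<pi> x)"
      for lam'
    proof (intro exI[of _ "\<lambda>k. if k = 0 then lam' 0 div p else if k = Suc m then lam' 0 mod p else lam' k"]
        ballI transport)
    qed simp_all
    show "\<exists>lam'. \<forall>x\<in>grayIdx p (1 # b). gray_codeword p (1 # b) lam' x = gray_codeword p t lam (\<pi> x)"
      for lam
    proof (intro exI[of _ "\<lambda>k. if k = 0 then lam (Suc m) mod p + p * lam 0 else lam k"]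
        ballI transport)
    qed simp_all
  qed
qed

theorem lemma7:
  fixes p s :: nat and t :: "nat list"
  assumes "prime p" and "s \<ge> 2" and "length t = s"
    and "t ! 0 \<ge> 1" and "t ! (s - 1) \<ge> 1"
  shows "perm_equiv
           (grayIdx p t) (grayCode p t)
           (grayIdx p (1 # (t ! 0 - 1) # take (s - 2) (drop 1 t) @ [t ! (s - 1) - 1]))
           (grayCode p (1 # (t ! 0 - 1) # take (s - 2) (drop 1 t) @ [t ! (s - 1) - 1]))"
proof -
  obtain t0 rest where "t = t0 # rest"
    using assms(2,3) by (cases t) auto
  moreover obtain mid tz where "rest = mid @ [tz]"
    using calculation assms(2,3) by (cases rest rule: rev_exhaust) auto
  ultimately have t: "t = t0 # mid @ [tz]"
    by simp
  have s: "s = length mid + 2"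
    using t assms(3) by simp
  have entries: "t ! 0 = t0" "t ! (s - 1) = tz" "take (s - 2) (drop 1 t) = mid"
    unfolding t s by (simp_all add: nth_append)
  have "1 \<le> t0" "1 \<le> tz"
    using assms(4,5) unfolding entries .
  show ?thesis
    unfolding entries
    using prime_gt_0_nat[OF assms(1)] \<open>1 \<le> t0\<close> \<open>1 \<le> tz\<close>
    by (intro perm_equiv_grayCode_Cons_one) (simp_all add: t col_factors_Cons_snoc)
qed

end
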